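(* The sequential specification $\mathsf{Mutex}$, defined by the ordered rules $R_0, R_{Lock}, R_{LU}$, is step-by-step linearizable: for every differentiated history $h$, every data value $x$, and every $i\in\{1,2,3\}$ with $(R_1,R_2,R_3)=(R_0,R_{Lock},R_{LU})$, if $h\sqsubseteq u$ for some $u\in M_x(R_i)$ and $h\setminus x\sqsubseteq[\![R_1,\dots,R_i]\!]$, then $h\sqsubseteq[\![R_1,\dots,R_i]\!]$.
   Context: Data values are natural numbers. Operations (resp. method events) are pairs of a method in $\{Lock, Unlock\}$ and a data value (a ghost parameter relating an $Unlock$ to its $Lock$). A history $h$ is a finite set of operations with a strict partial order $<_{hb}$ (happens-before) that is an interval order. A sequential execution is a finite sequence of method events. $h$ is differentiated if each data value is carried by at most one $Lock$ operation. $h\sqsubseteq u$ means there is a bijection between operations of $h$ and positions of $u$ preserving method and data value such that $o_1<_{hb}o_2$ implies the image of $o_1$ precedes that of $o_2$; $h\sqsubseteq S$ means $h\sqsubseteq u$ for some $u\in S$. $h\setminus x$ removes all operations with data value $x$. Rules: $R_0$: $\epsilon\in\mathsf{Mutex}$; $R_{Lock}$: $Lock(x)\in\mathsf{Mutex}$; $R_{LU}$: $u\in\mathsf{Mutex}\Rightarrow Lock(x)\cdot Unlock(x)\cdot u\in\mathsf{Mutex}$ ($x$ not in $u$). $[\![R_1,\dots,R_i]\!]$ is the smallest set of sequences closed under the listed rules. Matching sets with witness $x$: $M_x(R_0)=\{\epsilon\}$, $M_x(R_{Lock})=\{Lock(x)\}$, $M_x(R_{LU})$ = sequences $Lock(x)\cdot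 Unlock(x)\cdot u$ with $x$ not occurring in $u$. *)

theory Defs
  imports Main
begin

datatype meth = Lock | Unlock

type_synonym event = "meth \<times> nat"

text \<open>A history: a set of operation identifiers ops, a labelling lbl giving each
operation its method and data value, and a happens-before relation hb.\<close>

definition is_history :: "'o set \<Rightarrow> ('o \<times> 'o) set \<Rightarrow> bool" where
  "is_history ops hb \<longleftrightarrow> finite ops \<and> hb \<subseteq> ops \<times> ops \<and> irrefl hb \<and> trans hb \<and>
     (\<forall>a b c d. (a, b) \<in> hb \<longrightarrow> (c, d) \<in> hb \<longrightarrow> (a, d) \<in> hb \<or> (c, b) \<in> hb)"

definition differentiated :: "'o set \<Rightarrow> ('o \<Rightarrow> event) \<Rightarrow> bool" where
  "differentiated ops lbl \<longleftrightarrow>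
     (\<forall>o1\<in>ops. \<forall>o2\<in>ops. lbl o1 = (Lock, snd (lbl o1)) \<longrightarrow> lbl o2 = lbl o1 \<longrightarrow> o1 = o2)"

definition lin_of :: "'o set \<Rightarrow> ('o \<Rightarrow> event) \<Rightarrow> ('o \<times> 'o) set \<Rightarrow> event list \<Rightarrow> bool" where
  "lin_of ops lbl hb u \<longleftrightarrow> (\<exists>f. bij_betw f ops {..<length u} \<and>
     (\<forall>p\<in>ops. u ! f p = lbl p) \<and> (\<forall>o1 o2. (o1, o2) \<in> hb \<longrightarrow> f o1 < f o2))"

definition hist_in :: "'o set \<Rightarrow> ('o \<Rightarrow> event) \<Rightarrow> ('o \<times> 'o) set \<Rightarrow> event list set \<Rightarrow> bool" where
  "hist_in ops lbl hb S \<longleftrightarrow> (\<exists>u\<in>S. lin_of ops lbl hb u)"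

definition rem_ops :: "'o set \<Rightarrow> ('o \<Rightarrow> event) \<Rightarrow> nat \<Rightarrow> 'o set" where
  "rem_ops ops lbl x = {p \<in> ops. snd (lbl p) \<noteq> x}"

definition rem_hb :: "'o set \<Rightarrow> ('o \<Rightarrow> event) \<Rightarrow> ('o \<times> 'o) set \<Rightarrow> nat \<Rightarrow> ('o \<times> 'o) set" where
  "rem_hb ops lbl hb x = hb \<inter> (rem_ops ops lbl x \<times> rem_ops ops lbl x)"

datatype rule = R0 | RLock | RLU

definition vals :: "event list \<Rightarrow> nat set" where
  "vals u = snd ` set u"

inductive_set gen :: "rule list \<Rightarrow> event list set" for rs :: "rule list" where
  g0: "R0 \<in> set rs \<Longrightarrow> [] \<in> gen rs"
| gLock: "RLock \<in> set rs \<Longrightarrow> [(Lock, x)] \<in> gen rs"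
| gLU: "RLU \<in> set rs \<Longrightarrow> u \<in> gen rs \<Longrightarrow> x \<notin> vals u \<Longrightarrow> (Lock, x) # (Unlock, x) # u \<in> gen rs"

definition mutex_rules :: "rule list" where
  "mutex_rules = [R0, RLock, RLU]"

fun matching :: "nat \<Rightarrow> rule \<Rightarrow> event list set" where
  "matching x R0 = {[]}"
| "matching x RLock = {[(Lock, x)]}"
| "matching x RLU = {(Lock, x) # (Unlock, x) # u | u. x \<notin> vals u}"

end

theory Submission
  imports Defs
begin

text \<open>For the rules \<open>R\<^sub>0\<close> and \<open>R\<^sub>L\<^sub>o\<^sub>c\<^sub>k\<close> the matching sequence is itself generated, so only
\<open>R\<^sub>L\<^sub>U\<close> needs an argument. If \<open>h\<close> linearizes to \<open>Lock(x)\<cdot>Unlock(x)\<cdot>u\<close> with \<open>x\<close> not in \<open>u\<close>,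
the operations on \<open>x\<close> are exactly those placed in the first two positions, so no other
operation happens before them. Prepending them to a linearization \<open>v\<close> of \<open>h \<setminus> x\<close>
therefore linearizes \<open>h\<close> into \<open>Lock(x)\<cdot>Unlock(x)\<cdot>v\<close>, which \<open>R\<^sub>L\<^sub>U\<close> generates.\<close>

lemma lin_of_set_lbl:
  assumes "lin_of ops lbl hb u"
  shows "lbl ` ops = set u"
proof -
  obtain f where f: "bij_betw f ops {..<length u}" "\<forall>p\<in>ops. u ! f p = lbl p"
    using assms unfolding lin_of_def by blast
  have "lbl ` ops = (\<lambda>k. u ! k) ` f ` ops" using f(2) by (auto simp: image_image)
  also have "\<dots> = set u" using f(1) by (simp add: bij_betw_def set_conv_nth lessThan_def image_Collect)
  finally show ?thesis .
qed

lemma lin_of_append: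
  assumes u: "lin_of A lbl (Restr hb A) u" and v: "lin_of B lbl (Restr hb B) v"
    and disj: "A \<inter> B = {}" and hb: "hb \<subseteq> (A \<union> B) \<times> (A \<union> B)" and fwd: "hb \<inter> B \<times> A = {}"
  shows "lin_of (A \<union> B) lbl hb (u @ v)"
proof -
  obtain f where f: "bij_betw f A {..<length u}" "\<forall>p\<in>A. u ! f p = lbl p"
      "\<forall>p q. (p, q) \<in> Restr hb A \<longrightarrow> f p < f q"
    using u unfolding lin_of_def by blast
  obtain g where g: "bij_betw g B {..<length v}" "\<forall>p\<in>B. v ! g p = lbl p"
      "\<forall>p q. (p, q) \<in> Restr hb B \<longrightarrow> g p < g q"
    using v unfolding lin_of_def by blast
  define h where "h p = (if p \<in> A then f p else length u + g p)" for p
  have hA: "h p = f p" "f p < length u" if "p \<in> A" for p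
    using that f(1) by (auto simp: h_def bij_betw_def)
  have hB: "h p = length u + g p" if "p \<in> B" for p
    using that disj by (auto simp: h_def)
  have "bij_betw h A {..<length u}"
    using f(1) by (subst bij_betw_cong[where g = f]) (simp_all add: hA)
  moreover have "bij_betw ((+) (length u) \<circ> g) B {length u..<length u + length v}"
    using g(1) by (rule bij_betw_trans) (simp add: lessThan_atLeast0 add.commute)
  then have "bij_betw h B {length u..<length u + length v}"
    by (subst bij_betw_cong[where g = "(+) (length u) \<circ> g"]) (simp_all add: hB)
  ultimately have "bij_betw h (A \<union> B) ({..<length u} \<union> {length u..<length u + length v})"
    by (rule bij_betw_combine) auto
  then have "bij_betw h (A \<union> B) {..<length (u @ v)}"
    by (simp add: ivl_disj_un_one)
  moreover have "\<forall>p\<in>A \<union> B. (u @ v) ! h p = lbl p"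
    using f(2) g(2) hA hB by (auto simp: nth_append)
  moreover have "\<forall>p q. (p, q) \<in> hb \<longrightarrow> h p < h q"
  proof (intro allI impI)
    fix p q assume pq: "(p, q) \<in> hb"
    then consider "p \<in> A" "q \<in> A" | "p \<in> A" "q \<in> B" | "p \<in> B" "q \<in> B"
      using hb fwd by blast
    then show "h p < h q"
      by cases (use pq f(3) g(3) in \<open>auto simp: hA hB trans_less_add1\<close>)
  qed
  ultimately show ?thesis unfolding lin_of_def by blast
qed

lemma lin_of_value_prefix:
  assumes lin: "lin_of ops lbl hb (w @ u)" and hb: "hb \<subseteq> ops \<times> ops"
    and w: "\<forall>e\<in>set w. snd e = x" and u: "x \<notin> vals u"
  defines "X \<equiv> {p \<in> ops. snd (lbl p) = x}"
  shows "lin_of X lbl (Restr hb X) w" and "hb \<inter> (ops - X) \<times> X = {}"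
proof -
  obtain f where f: "bij_betw f ops {..<length (w @ u)}" "\<forall>p\<in>ops. (w @ u) ! f p = lbl p"
      "\<forall>p q. (p, q) \<in> hb \<longrightarrow> f p < f q"
    using lin unfolding lin_of_def by blast
  have X_iff: "p \<in> X \<longleftrightarrow> f p < length w" if "p \<in> ops" for p
  proof
    assume "f p < length w"
    then have "lbl p \<in> set w" using f(2) that by (metis nth_append nth_mem)
    then show "p \<in> X" using w that by (simp add: X_def)
  next
    assume "p \<in> X"
    show "f p < length w"
    proof (rule ccontr)
      assume "\<not> f p < length w"
      moreover have "f p < length (w @ u)" using f(1) that by (auto simp: bij_betw_def)
      ultimately have "lbl p = u ! (f p - length w)" "f p - length w < length u"
        using f(2) that by (auto simp: nth_append)
      then have "lbl p \<in> set u" by simp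
      then show False using u \<open>p \<in> X\<close> by (force simp: X_def vals_def)
    qed
  qed
  have "X \<subseteq> ops" by (simp add: X_def)
  have "f ` X = {..<length w}"
  proof
    show "f ` X \<subseteq> {..<length w}" using X_iff \<open>X \<subseteq> ops\<close> by auto
    show "{..<length w} \<subseteq> f ` X"
    proof
      fix k assume "k \<in> {..<length w}"
      then have "k \<in> f ` ops" using f(1) by (simp add: bij_betw_def)
      then obtain p where "p \<in> ops" "f p = k" by blast
      then show "k \<in> f ` X" using X_iff \<open>k \<in> {..<length w}\<close> by auto
    qed
  qed
  then have "bij_betw f X {..<length w}"
    using f(1) \<open>X \<subseteq> ops\<close> by (auto simp: bij_betw_def intro: inj_on_subset)
  moreover have "\<forall>p\<in>X. w ! f p = lbl p"
    using f(2) X_iff \<open>X \<subseteq> ops\<close> by (metis nth_append subsetD)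
  ultimately show "lin_of X lbl (Restr hb X) w"
    using f(3) unfolding lin_of_def by blast
  show "hb \<inter> (ops - X) \<times> X = {}"
    using f(3) X_iff \<open>X \<subseteq> ops\<close> by fastforce
qed

lemma hist_in_gen_LU:
  assumes hist: "is_history ops hb" and LU: "RLU \<in> set rs"
    and u: "x \<notin> vals u" "lin_of ops lbl hb ((Lock, x) # (Unlock, x) # u)"
    and rem: "hist_in (rem_ops ops lbl x) lbl (rem_hb ops lbl hb x) (gen rs)"
  shows "hist_in ops lbl hb (gen rs)"
proof -
  obtain v where v: "v \<in> gen rs" "lin_of (rem_ops ops lbl x) lbl (rem_hb ops lbl hb x) v"
    using rem unfolding hist_in_def by blast
  define X where "X = {p \<in> ops. snd (lbl p) = x}"
  have hb: "hb \<subseteq> ops \<times> ops" using hist by (simp add: is_history_def)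
  have rem_X: "rem_ops ops lbl x = ops - X" by (auto simp: rem_ops_def X_def)
  have "vals v = snd ` lbl ` rem_ops ops lbl x"
    using lin_of_set_lbl[OF v(2)] by (simp add: vals_def)
  then have "x \<notin> vals v" by (auto simp: rem_ops_def)
  then have gen: "[(Lock, x), (Unlock, x)] @ v \<in> gen rs"
    using gen.gLU[OF LU v(1)] by simp
  have "lin_of ops lbl hb ([(Lock, x), (Unlock, x)] @ u)" using u(2) by simp
  from lin_of_value_prefix[OF this hb _ u(1)]
  have "lin_of X lbl (Restr hb X) [(Lock, x), (Unlock, x)]" "hb \<inter> (ops - X) \<times> X = {}"
    unfolding X_def by auto
  moreover have "lin_of (ops - X) lbl (Restr hb (ops - X)) v"
    using v(2) by (simp add: rem_X rem_hb_def)
  ultimately have "lin_of (X \<union> (ops - X)) lbl hb ([(Lock, x), (Unlock, x)] @ v)"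
    using hb by (intro lin_of_append) auto
  moreover have "X \<union> (ops - X) = ops" by (auto simp: X_def)
  ultimately have "lin_of ops lbl hb ([(Lock, x), (Unlock, x)] @ v)" by simp
  with gen show ?thesis unfolding hist_in_def by blast
qed

theorem mainTheorem3:
  fixes ops :: "'o set" and lbl :: "'o \<Rightarrow> event" and hb :: "('o \<times> 'o) set"
    and x :: nat and i :: nat
  assumes "is_history ops hb"
    and "differentiated ops lbl"
    and "i \<in> {1, 2, 3}"
    and "\<exists>u \<in> matching x (mutex_rules ! (i - 1)). lin_of ops lbl hb u"
    and "hist_in (rem_ops ops lbl x) lbl (rem_hb ops lbl hb x) (gen (take i mutex_rules))"
  shows "hist_in ops lbl hb (gen (take i mutex_rules))"
proof -
  consider "i = 1" | "i = 2" | "i = 3" using assms(3) by auto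
  then show ?thesis
  proof cases
    case 1
    then have "[] \<in> gen (take i mutex_rules)" by (simp add: mutex_rules_def gen.g0)
    with 1 assms(4) show ?thesis by (auto simp: mutex_rules_def hist_in_def)
  next
    case 2
    then have "[(Lock, x)] \<in> gen (take i mutex_rules)" by (simp add: mutex_rules_def gen.gLock)
    with 2 assms(4) show ?thesis by (auto simp: mutex_rules_def hist_in_def)
  next
    case 3
    with assms(4) obtain u where "x \<notin> vals u" "lin_of ops lbl hb ((Lock, x) # (Unlock, x) # u)"
      by (auto simp: mutex_rules_def)
    moreover have "RLU \<in> set (take i mutex_rules)" using 3 by (simp add: mutex_rules_def)
    ultimately show ?thesis using hist_in_gen_LU assms(1,5) by blast
  qed
qed

end
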